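(* Let $A = \mathbb{R}^{\ast} \rtimes \mathbb{R}$ be the affine group and let $Z = \{(1,m) : m \in \mathbb{Z}\} \cong \mathbb{Z}$. Then every nonzero $f \in L^2(A)$ has linearly independent left $Z$-translations: if $z_1,\dots,z_n\in Z$ are distinct and $c_1,\dots,c_n\in\mathbb{C}$ are not all zero, then $\sum_k c_k L(z_k) f \neq 0$.
   Context: $\mathbb{R}^\ast=\mathbb{R}\setminus\{0\}$. The affine group $A$ consists of pairs $(a,b)\in\mathbb{R}^\ast\times\mathbb{R}$ with multiplication $(a,b)(c,d)=(ac,b+ad)$; its left Haar measure is $\frac{da\,db}{a^2}$, and $L^2(A)$ is taken with respect to it. $L(g)f(x)=f(g^{-1}x)$. *)

theory Defs
  imports "HOL-Analysis.Analysis"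
begin

definition aff_carrier :: "(real \<times> real) set" where
  "aff_carrier = {(a, b). a \<noteq> 0}"

definition aff_mult :: "real \<times> real \<Rightarrow> real \<times> real \<Rightarrow> real \<times> real" where
  "aff_mult g h = (fst g * fst h, snd g + fst g * snd h)"

definition aff_inv :: "real \<times> real \<Rightarrow> real \<times> real" where
  "aff_inv g = (1 / fst g, - snd g / fst g)"

text \<open>Left Haar measure da db / a^2 (the line a = 0 is a null set).\<close>

definition haar_A :: "(real \<times> real) measure" where
  "haar_A = density (lborel \<Otimes>\<^sub>M lborel)
     (\<lambda>x. if fst x \<noteq> 0 then ennreal (1 / (fst x)\<^sup>2) else 0)"

definition L2_A :: "(real \<times> real \<Rightarrow> complex) set" where
  "L2_A = {f. f \<in> borel_measurable haar_A \<and> integrable haar_A (\<lambda>x. (cmod (f x))\<^sup>2)}"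

definition left_transl :: "real \<times> real \<Rightarrow> (real \<times> real \<Rightarrow> complex) \<Rightarrow> real \<times> real \<Rightarrow> complex" where
  "left_transl g f x = f (aff_mult (aff_inv g) x)"

definition aff_Z :: "(real \<times> real) set" where
  "aff_Z = {(1, real_of_int m) | m. True}"

end

theory Submission
  imports Defs "HOL-Computational_Algebra.Fundamental_Theorem_Algebra"
begin

text \<open>
  The translations in Z act on the second coordinate only and preserve the Haar measure, so a
  vanishing combination of them reads P(T) f = 0 for the unit translation T (T g) x = g (x + (0,1))
  and a nonzero complex polynomial P. Factoring P into linear factors, it suffices that T has no
  eigenfunctions in L2(A). If T g = l g, then the mass of |g|^2 on the strip j \<le> b < j + 1 is
  |l|^(2j) times the mass on the strip 0 \<le> b < 1; these masses add up to at most the finite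
  norm of g, which is only possible if they all vanish.
\<close>

lemma haar_A_eq_density_lborel:
  "haar_A = density lborel (\<lambda>x. if fst x \<noteq> 0 then ennreal (1 / (fst x)\<^sup>2) else 0)"
  unfolding haar_A_def lborel_prod ..

lemma sets_haar_A [simp, measurable_cong]: "sets haar_A = sets borel"
  by (simp add: haar_A_eq_density_lborel)

lemma space_haar_A [simp]: "space haar_A = UNIV"
  by (simp add: haar_A_eq_density_lborel)

lemma measurable_haar_A [simp]: "measurable haar_A N = measurable borel N"
  by (rule measurable_cong_sets) auto

lemma measurable_fst_borel [measurable]:
  "fst \<in> (borel :: ('a::second_countable_topology \<times> 'b::second_countable_topology) measure) \<rightarrow>\<^sub>M borel"
  by (simp flip: borel_prod)

lemma measurable_snd_borel [measurable]:
  "snd \<in> (borel :: ('a::second_countable_topology \<times> 'b::second_countable_topology) measure) \<rightarrow>\<^sub>M borel"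
  by (simp flip: borel_prod)

lemma nn_integral_haar_A_translate:
  assumes [measurable]: "h \<in> borel_measurable borel"
  shows "(\<integral>\<^sup>+x. h (x + (0, r)) \<partial>haar_A) = (\<integral>\<^sup>+x. h x \<partial>haar_A)"
proof -
  define w :: "real \<times> real \<Rightarrow> ennreal"
    where "w x = (if fst x \<noteq> 0 then ennreal (1 / (fst x)\<^sup>2) else 0)" for x
  have [measurable]: "w \<in> borel_measurable borel"
    unfolding w_def by measurable
  have w_translate: "w (x + (0, r)) = w x" for x
    by (simp add: w_def)
  have "(\<integral>\<^sup>+x. h (x + (0, r)) \<partial>haar_A) = (\<integral>\<^sup>+x. w (x + (0, r)) * h (x + (0, r)) \<partial>lborel)"
    unfolding haar_A_eq_density_lborel w_def[symmetric]
    by (subst nn_integral_density) (auto simp: w_translate)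
  also have "\<dots> = (\<integral>\<^sup>+x. w ((0, r) + x) * h ((0, r) + x) \<partial>lborel)"
    by (simp add: add.commute)
  also have "\<dots> = (\<integral>\<^sup>+y. w y * h y \<partial>distr lborel borel ((+) (0, r)))"
    by (subst nn_integral_distr) auto
  also have "\<dots> = (\<integral>\<^sup>+x. h x \<partial>haar_A)"
    unfolding lborel_distr_plus haar_A_eq_density_lborel w_def[symmetric]
    by (subst nn_integral_density) auto
  finally show ?thesis .
qed

lemma distr_haar_A_translate: "distr haar_A haar_A (\<lambda>x. x + (0, r)) = haar_A"
proof (rule measure_eqI)
  fix A assume "A \<in> sets (distr haar_A haar_A (\<lambda>x. x + (0, r)))"
  then have [measurable]: "A \<in> sets borel" by simp
  have "emeasure (distr haar_A haar_A (\<lambda>x. x + (0, r))) A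
      = emeasure haar_A ((\<lambda>x. x + (0, r)) -` A)"
    by (subst emeasure_distr) auto
  also have "\<dots> = (\<integral>\<^sup>+x. indicator A (x + (0, r)) \<partial>haar_A)"
  proof -
    have "(\<lambda>x. x + (0, r)) -` A \<in> sets haar_A"
      using measurable_sets_borel[of "\<lambda>x. x + (0, r)" borel A] by simp
    moreover have "indicator ((\<lambda>x. x + (0, r)) -` A) = (\<lambda>x. indicator A (x + (0, r)) :: ennreal)"
      by (auto simp: indicator_def)
    ultimately show ?thesis
      by (metis nn_integral_indicator)
  qed
  also have "\<dots> = emeasure haar_A A"
    by (subst nn_integral_haar_A_translate) auto
  finally show "emeasure (distr haar_A haar_A (\<lambda>x. x + (0, r))) A = emeasure haar_A A" .
qed simp

lemma AE_haar_A_translate: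
  assumes "AE x in haar_A. P x"
  shows "AE x in haar_A. P (x + (0, r))"
proof (rule AE_distrD[of "\<lambda>x. x + (0, r)" haar_A haar_A P])
  show "(\<lambda>x. x + (0, r)) \<in> measurable haar_A haar_A"
    by simp
  show "AE x in distr haar_A haar_A (\<lambda>x. x + (0, r)). P x"
    using assms by (simp only: distr_haar_A_translate)
qed

lemma L2_A_translate:
  assumes "g \<in> L2_A"
  shows "(\<lambda>x. g (x + (0, r))) \<in> L2_A"
proof -
  from assms have [measurable]: "g \<in> borel_measurable borel"
    and "integrable haar_A (\<lambda>x. (cmod (g x))\<^sup>2)"
    by (auto simp: L2_A_def)
  then have "integrable (distr haar_A haar_A (\<lambda>x. x + (0, r))) (\<lambda>x. (cmod (g x))\<^sup>2)"
    by (simp only: distr_haar_A_translate)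
  then have "integrable haar_A (\<lambda>x. (cmod (g (x + (0, r))))\<^sup>2)"
    by (subst (asm) integrable_distr_eq) auto
  then show ?thesis
    by (simp add: L2_A_def)
qed

lemma L2_A_cmult:
  assumes "g \<in> L2_A"
  shows "(\<lambda>x. a * g x) \<in> L2_A"
proof -
  from assms have [measurable]: "g \<in> borel_measurable borel"
    and "integrable haar_A (\<lambda>x. (cmod a)\<^sup>2 * (cmod (g x))\<^sup>2)"
    by (auto simp: L2_A_def)
  then show ?thesis
    by (simp add: L2_A_def norm_mult power_mult_distrib)
qed

lemma L2_A_add:
  assumes "g \<in> L2_A" and "h \<in> L2_A"
  shows "(\<lambda>x. g x + h x) \<in> L2_A"
proof -
  from assms have [measurable]: "g \<in> borel_measurable borel" "h \<in> borel_measurable borel"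
    and bound_integrable: "integrable haar_A (\<lambda>x. 2 * (cmod (g x))\<^sup>2 + 2 * (cmod (h x))\<^sup>2)"
    by (auto simp: L2_A_def)
  have pointwise_bound: "norm ((cmod (g x + h x))\<^sup>2) \<le> norm (2 * (cmod (g x))\<^sup>2 + 2 * (cmod (h x))\<^sup>2)" for x
  proof -
    have "(cmod (g x + h x))\<^sup>2 \<le> (cmod (g x) + cmod (h x))\<^sup>2"
      by (simp add: norm_triangle_ineq power_mono)
    also have "\<dots> \<le> 2 * (cmod (g x))\<^sup>2 + 2 * (cmod (h x))\<^sup>2"
      by (simp add: power2_sum) (smt (verit) sum_squares_bound)
    finally show ?thesis
      by simp
  qed
  have "integrable haar_A (\<lambda>x. (cmod (g x + h x))\<^sup>2)"
    by (rule Bochner_Integration.integrable_bound[OF bound_integrable _ AE_I2[OF pointwise_bound]]) simp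
  then show ?thesis
    by (simp add: L2_A_def)
qed

lemma L2_A_sum:
  assumes "finite I" and "\<And>i. i \<in> I \<Longrightarrow> g i \<in> L2_A"
  shows "(\<lambda>x. \<Sum>i\<in>I. g i x) \<in> L2_A"
  using assms
proof (induction I rule: finite_induct)
  case empty
  then show ?case
    by (simp add: L2_A_def)
next
  case (insert i I)
  then show ?case
    by (simp add: L2_A_add)
qed

lemma ennreal_eq_0_if_of_nat_mult_le:
  fixes a C :: ennreal
  assumes "\<And>N::nat. of_nat N * a \<le> C" and "C < \<infinity>"
  shows "a = 0"
proof (rule ccontr)
  assume "a \<noteq> 0"
  from assms obtain c where C: "C = ennreal c" "0 \<le> c"
    by (cases C) auto
  moreover have "a \<le> C"
    using assms(1)[of 1] by simp
  ultimately obtain r where a: "a = ennreal r" "0 < r"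
    using \<open>a \<noteq> 0\<close> by (cases a) (auto simp: top_unique)
  obtain N where "c < real N * r"
    using ex_less_of_nat_mult[OF \<open>0 < r\<close>] by blast
  moreover have "ennreal (real N * r) \<le> ennreal c"
    using assms(1)[of N] a C by (simp add: ennreal_of_nat_eq_real_of_nat ennreal_mult)
  ultimately show False
    using C(2) by (simp add: ennreal_le_iff)
qed

lemma ennreal_int_geometric_eq_0:
  fixes a :: "int \<Rightarrow> ennreal"
  assumes step: "\<And>i. a (i + 1) = q * a i"
    and bounded: "\<And>F. finite F \<Longrightarrow> sum a F \<le> C" and "C < \<infinity>"
  shows "a j = 0"
proof -
  have long_runs: "\<exists>F. finite F \<and> card F = N \<and> (\<forall>i\<in>F. a j \<le> a i)" for N
  proof (cases "1 \<le> q")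
    case True
    have "a j \<le> a i" if "j \<le> i" for i
      using that
    proof (induction i rule: int_ge_induct)
      case (step i)
      have "a i \<le> q * a i"
        using mult_right_mono[OF True, of "a i"] by simp
      with step.IH show ?case
        by (simp add: assms(1))
    qed simp
    then show ?thesis
      by (intro exI[of _ "{j..<j + int N}"]) simp
  next
    case False
    then have "q \<le> 1"
      by simp
    have "a j \<le> a i" if "i \<le> j" for i
      using that
    proof (induction i rule: int_le_induct)
      case (step i)
      have "a i = q * a (i - 1)"
        using assms(1)[of "i - 1"] by simp
      also have "\<dots> \<le> a (i - 1)"
        using mult_right_mono[OF \<open>q \<le> 1\<close>, of "a (i - 1)"] by simp
      finally show ?case
        using step.IH by simp
    qed simp
    then show ?thesis
      by (intro exI[of _ "{j - int N<..j}"]) simp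
  qed
  have multiples_bounded: "of_nat N * a j \<le> C" for N
  proof -
    obtain F where "finite F" "card F = N" "\<forall>i\<in>F. a j \<le> a i"
      using long_runs by blast
    then have "of_nat N * a j \<le> sum a F"
      using sum_bounded_below[of F "a j" a] by simp
    also have "\<dots> \<le> C"
      using \<open>finite F\<close> by (rule bounded)
    finally show ?thesis .
  qed
  show ?thesis
    using multiples_bounded \<open>C < \<infinity>\<close> by (rule ennreal_eq_0_if_of_nat_mult_le)
qed

definition strip :: "int \<Rightarrow> (real \<times> real) set" where
  "strip j = {x. \<lfloor>snd x\<rfloor> = j}"

lemma sets_strip [measurable]: "strip j \<in> sets borel"
proof -
  have "strip j = snd -` {real_of_int j..<real_of_int j + 1}"
    by (auto simp: strip_def floor_eq_iff)
  then show ?thesis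
    using measurable_sets_borel[OF measurable_snd_borel atLeastLessThan_borel] by simp
qed

lemma sum_nn_integral_strips_le:
  assumes [measurable]: "h \<in> borel_measurable borel" and "finite F"
  shows "(\<Sum>j\<in>F. \<integral>\<^sup>+x. h x * indicator (strip j) x \<partial>haar_A) \<le> (\<integral>\<^sup>+x. h x \<partial>haar_A)"
proof -
  have "(\<Sum>j\<in>F. \<integral>\<^sup>+x. h x * indicator (strip j) x \<partial>haar_A)
      = (\<integral>\<^sup>+x. h x * (\<Sum>j\<in>F. indicator (strip j) x) \<partial>haar_A)"
    by (subst nn_integral_sum[symmetric]) (simp_all add: sum_distrib_left)
  also have "\<dots> \<le> (\<integral>\<^sup>+x. h x \<partial>haar_A)"
  proof (rule nn_integral_mono)
    fix x
    have "(\<Sum>j\<in>F. indicator (strip j) x :: ennreal) = (\<Sum>j\<in>F. if j = \<lfloor>snd x\<rfloor> then 1 else 0)"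
      by (intro sum.cong) (auto simp: strip_def indicator_def)
    also have "\<dots> \<le> 1"
      using \<open>finite F\<close> by (simp add: sum.delta')
    finally show "h x * (\<Sum>j\<in>F. indicator (strip j) x) \<le> h x"
      using mult_left_mono[of _ 1 "h x"] by simp
  qed
  finally show ?thesis .
qed

lemma AE_eq_0_if_translate_eigenfunction:
  assumes "g \<in> L2_A" and eigen: "AE x in haar_A. g (x + (0, 1)) = l * g x"
  shows "AE x in haar_A. g x = 0"
proof -
  from assms have [measurable]: "g \<in> borel_measurable borel"
    and "integrable haar_A (\<lambda>x. (cmod (g x))\<^sup>2)"
    by (auto simp: L2_A_def)
  define C where "C = (\<integral>\<^sup>+x. ennreal ((cmod (g x))\<^sup>2) \<partial>haar_A)"
  define I where "I j = (\<integral>\<^sup>+x. ennreal ((cmod (g x))\<^sup>2) * indicator (strip j) x \<partial>haar_A)" for j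
  have "C < \<infinity>"
    using \<open>integrable haar_A _\<close> by (auto simp: C_def less_top)
  have "I (j + 1) = ennreal ((cmod l)\<^sup>2) * I j" for j
  proof -
    have "I (j + 1) = (\<integral>\<^sup>+x. ennreal ((cmod (g (x + (0, 1))))\<^sup>2) * indicator (strip (j + 1)) (x + (0, 1)) \<partial>haar_A)"
      unfolding I_def by (rule nn_integral_haar_A_translate[symmetric]) measurable
    also have "\<dots> = (\<integral>\<^sup>+x. ennreal ((cmod l)\<^sup>2) * (ennreal ((cmod (g x))\<^sup>2) * indicator (strip j) x) \<partial>haar_A)"
      using eigen by (intro nn_integral_cong_AE, eventually_elim)
        (simp add: strip_def indicator_def norm_mult power_mult_distrib ennreal_mult)
    also have "\<dots> = ennreal ((cmod l)\<^sup>2) * I j"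
      unfolding I_def by (rule nn_integral_cmult) simp
    finally show ?thesis .
  qed
  moreover have "sum I F \<le> C" if "finite F" for F
    unfolding I_def C_def using that by (intro sum_nn_integral_strips_le) simp_all
  ultimately have "I j = 0" for j
    using \<open>C < \<infinity>\<close> by (rule ennreal_int_geometric_eq_0)
  then have "AE x in haar_A. ennreal ((cmod (g x))\<^sup>2) * indicator (strip j) x = 0" for j
    unfolding I_def by (subst (asm) nn_integral_0_iff_AE) simp_all
  then have "AE x in haar_A. \<forall>j. ennreal ((cmod (g x))\<^sup>2) * indicator (strip j) x = 0"
    by (intro AE_all_countable[THEN iffD2] allI)
  then show ?thesis
  proof eventually_elim
    case (elim x)
    then show ?case
      using spec[OF elim, of "\<lfloor>snd x\<rfloor>"] by (simp add: strip_def)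
  qed
qed

text \<open>\<open>poly_shift P g\<close> is P(T) g for the unit translation T in the second coordinate.\<close>

definition poly_shift :: "complex poly \<Rightarrow> (real \<times> real \<Rightarrow> complex) \<Rightarrow> real \<times> real \<Rightarrow> complex" where
  "poly_shift P g x = (\<Sum>i\<le>degree P. coeff P i * g (x + (0, real i)))"

lemma poly_shift_eq_sum_atMost:
  assumes "degree P \<le> N"
  shows "poly_shift P g x = (\<Sum>i\<le>N. coeff P i * g (x + (0, real i)))"
  unfolding poly_shift_def using assms
  by (intro sum.mono_neutral_left) (auto simp: coeff_eq_0)

lemma L2_A_poly_shift:
  assumes "g \<in> L2_A"
  shows "poly_shift P g \<in> L2_A"
  unfolding poly_shift_def using assms
  by (intro L2_A_sum L2_A_cmult L2_A_translate) simp_all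

lemma poly_shift_const: "poly_shift [:c:] g x = c * g x"
  by (simp add: poly_shift_def flip: zero_prod_def)

lemma poly_shift_linear_factor:
  "poly_shift ([:-l, 1:] * Q) g x = poly_shift Q g (x + (0, 1)) - l * poly_shift Q g x"
proof -
  define N where "N = Suc (degree Q)"
  have "degree ([:-l, 1:] * Q) \<le> N"
    unfolding N_def by (rule order.trans[OF degree_mult_le]) simp
  moreover have "[:-l, 1:] * Q = pCons 0 Q - smult l Q"
    by (simp add: mult_pCons_left)
  ultimately have "poly_shift ([:-l, 1:] * Q) g x
      = (\<Sum>i\<le>N. coeff (pCons 0 Q) i * g (x + (0, real i)))
        - l * (\<Sum>i\<le>N. coeff Q i * g (x + (0, real i)))"
    by (subst poly_shift_eq_sum_atMost) (simp_all add: algebra_simps sum_subtractf sum_distrib_left)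
  also have "(\<Sum>i\<le>N. coeff Q i * g (x + (0, real i))) = poly_shift Q g x"
    by (rule poly_shift_eq_sum_atMost[symmetric]) (simp add: N_def)
  also have "(\<Sum>i\<le>N. coeff (pCons 0 Q) i * g (x + (0, real i))) = poly_shift Q g (x + (0, 1))"
    unfolding N_def by (subst sum.atMost_Suc_shift) (simp add: poly_shift_def add.assoc)
  finally show ?thesis .
qed

lemma AE_eq_0_if_poly_shift_eq_0:
  assumes "P \<noteq> 0" and "g \<in> L2_A" and "AE x in haar_A. poly_shift P g x = 0"
  shows "AE x in haar_A. g x = 0"
  using assms
proof (induction "degree P" arbitrary: P rule: less_induct)
  case less
  show ?case
  proof (cases "degree P = 0")
    case True
    then obtain c where "P = [:c:]" and "c \<noteq> 0"
      using \<open>P \<noteq> 0\<close> by (metis degree_eq_zeroE pCons_0_0)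
    with less.prems(3) show ?thesis
      by (simp add: poly_shift_const)
  next
    case False
    then have "\<not> constant (poly P)"
      by (simp add: constant_degree)
    then obtain l where "poly P l = 0"
      using fundamental_theorem_of_algebra by blast
    then obtain Q where P: "P = [:-l, 1:] * Q"
      by (metis dvdE poly_eq_0_iff_dvd)
    with \<open>P \<noteq> 0\<close> have "Q \<noteq> 0"
      by auto
    have "degree P = degree [:-l, 1:] + degree Q"
      unfolding P by (rule degree_mult_eq) (simp_all add: \<open>Q \<noteq> 0\<close>)
    then have "degree Q < degree P"
      by simp
    have "AE x in haar_A. poly_shift Q g (x + (0, 1)) = l * poly_shift Q g x"
      using less.prems(3) unfolding P poly_shift_linear_factor by eventually_elim simp
    with \<open>g \<in> L2_A\<close> have "AE x in haar_A. poly_shift Q g x = 0"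
      by (intro AE_eq_0_if_translate_eigenfunction L2_A_poly_shift)
    with less.hyps[OF \<open>degree Q < degree P\<close> \<open>Q \<noteq> 0\<close> \<open>g \<in> L2_A\<close>] show ?thesis
      by simp
  qed
qed

lemma poly_shift_sum_monom:
  fixes e :: "nat \<Rightarrow> nat" and n :: nat
  assumes "inj_on e {..<n}"
  shows "poly_shift (\<Sum>k<n. monom (c k) (e k)) g x = (\<Sum>k<n. c k * g (x + (0, real (e k))))"
proof -
  define P where "P = (\<Sum>k<n. monom (c k) (e k))"
  define N where "N = degree P + (\<Sum>k<n. e k)"
  have e_le_N: "e k \<le> N" if "k < n" for k
    unfolding N_def using that by (intro trans_le_add2 member_le_sum) auto
  have "poly_shift P g x = (\<Sum>i\<le>N. coeff P i * g (x + (0, real i)))"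
    by (rule poly_shift_eq_sum_atMost) (simp add: N_def)
  also have "\<dots> = (\<Sum>i\<le>N. \<Sum>k<n. if e k = i then c k * g (x + (0, real i)) else 0)"
    unfolding P_def coeff_sum sum_distrib_right by (intro sum.cong refl) simp
  also have "\<dots> = (\<Sum>k<n. \<Sum>i\<le>N. if e k = i then c k * g (x + (0, real i)) else 0)"
    by (rule sum.swap)
  also have "\<dots> = (\<Sum>k<n. c k * g (x + (0, real (e k))))"
    by (rule sum.cong[OF refl]) (use e_le_N in \<open>auto simp: sum.delta\<close>)
  finally show ?thesis
    unfolding P_def .
qed

lemma AE_eq_0_if_translate_combination_eq_0:
  fixes m :: "nat \<Rightarrow> int"
  assumes "g \<in> L2_A" and "inj_on m {..<n}" and "\<exists>k<n. c k \<noteq> 0"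
    and "AE x in haar_A. (\<Sum>k<n. c k * g (x + (0, of_int (m k)))) = 0"
  shows "AE x in haar_A. g x = 0"
proof -
  obtain k0 where "k0 < n" and "c k0 \<noteq> 0"
    using assms(3) by blast
  define M where "M = Min (m ` {..<n})"
  \<comment> \<open>after translating by \<open>-M\<close> all exponents \<open>e k\<close> are natural numbers\<close>
  define e where "e k = nat (m k - M)" for k
  have e: "real (e k) = of_int (m k) - of_int M" if "k < n" for k
    using that by (simp add: e_def M_def)
  have "inj_on e {..<n}"
  proof (rule inj_onI)
    fix k k' assume "k \<in> {..<n}" "k' \<in> {..<n}" "e k = e k'"
    then have "m k = m k'"
      using e[of k] e[of k'] by simp
    with assms(2) \<open>k \<in> {..<n}\<close> \<open>k' \<in> {..<n}\<close> show "k = k'"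
      by (auto dest: inj_onD)
  qed
  define P where "P = (\<Sum>k<n. monom (c k) (e k))"
  have "coeff P (e k0) = (\<Sum>k<n. if k = k0 then c k else 0)"
    unfolding P_def coeff_sum using \<open>inj_on e {..<n}\<close> \<open>k0 < n\<close>
    by (intro sum.cong) (auto dest: inj_onD)
  also have "\<dots> = c k0"
    using \<open>k0 < n\<close> by simp
  finally have "coeff P (e k0) = c k0" .
  with \<open>c k0 \<noteq> 0\<close> have "P \<noteq> 0"
    by auto
  moreover have "AE x in haar_A. poly_shift P g x = 0"
    using AE_haar_A_translate[OF assms(4), of "- of_int M"]
  proof eventually_elim
    case (elim x)
    have "poly_shift P g x = (\<Sum>k<n. c k * g (x + (0, - of_int M) + (0, of_int (m k))))"
      unfolding P_def poly_shift_sum_monom[OF \<open>inj_on e {..<n}\<close>]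
      by (intro sum.cong) (simp_all add: e add.assoc)
    with elim show ?case
      by simp
  qed
  ultimately show ?thesis
    by (rule AE_eq_0_if_poly_shift_eq_0[OF _ assms(1)])
qed

lemma left_transl_aff_Z: "left_transl (1, of_int m) f x = f (x + (0, - of_int m))"
  by (cases x) (simp add: left_transl_def aff_mult_def aff_inv_def)

theorem corollary5p5:
  fixes f :: "real \<times> real \<Rightarrow> complex"
    and n :: nat and z :: "nat \<Rightarrow> real \<times> real" and c :: "nat \<Rightarrow> complex"
  assumes "f \<in> L2_A"
    and "\<not> (AE x in haar_A. f x = 0)"
    and "\<forall>k<n. z k \<in> aff_Z"
    and "inj_on z {..<n}"
    and "\<exists>k<n. c k \<noteq> 0"
  shows "\<not> (AE x in haar_A. (\<Sum>k<n. c k * left_transl (z k) f x) = 0)"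
proof
  assume "AE x in haar_A. (\<Sum>k<n. c k * left_transl (z k) f x) = 0"
  define m where "m k = \<lfloor>snd (z k)\<rfloor>" for k
  have z: "z k = (1, of_int (m k))" if "k < n" for k
    using assms(3) that by (auto simp: aff_Z_def m_def)
  have "inj_on (\<lambda>k. - m k) {..<n}"
  proof (rule inj_onI)
    fix k k' assume "k \<in> {..<n}" "k' \<in> {..<n}" "- m k = - m k'"
    then have "z k = z k'"
      by (simp add: z)
    with \<open>k \<in> {..<n}\<close> \<open>k' \<in> {..<n}\<close> show "k = k'"
      by (intro inj_onD[OF assms(4)])
  qed
  moreover have "AE x in haar_A. (\<Sum>k<n. c k * f (x + (0, of_int (- m k)))) = 0"
    using \<open>AE x in haar_A. _ = 0\<close>
  proof eventually_elim
    case (elim x)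
    have "(\<Sum>k<n. c k * f (x + (0, of_int (- m k)))) = (\<Sum>k<n. c k * left_transl (z k) f x)"
      by (intro sum.cong) (simp_all add: z left_transl_aff_Z)
    with elim show ?case
      by simp
  qed
  ultimately have "AE x in haar_A. f x = 0"
    by (rule AE_eq_0_if_translate_combination_eq_0[OF assms(1) _ assms(5)])
  with assms(2) show False
    by blast
qed

end
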